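(* Let $w\ge 4$ and $u=w-2$. Then $$\sum_{\substack{a+b=w-1\\ a\ge 2,\ b\ge1}} T(a,b,1)=2T(u,2)+4\Big(\zeta(u,\bar1,\bar1)+\zeta(\bar u,1,1)-\zeta(\bar u,1,\bar1)-\zeta(u,\bar1,1)\Big).$$
   Context: Multiple $T$-values: for positive integers $s_1,\dots,s_d$ with $s_1>1$, $T(s_1,\dots,s_d)=\sum_{m_1>\dots>m_d>0,\ m_j\equiv d-j+1\ (\mathrm{mod}\ 2)}\frac{2^d}{m_1^{s_1}\cdots m_d^{s_d}}$. Euler sums: $\zeta(s_1,\dots,s_d;z_1,\dots,z_d)=\sum_{n_1>\dots>n_d>0}\frac{z_1^{n_1}\cdots z_d^{n_d}}{n_1^{s_1}\cdots n_d^{s_d}}$, $z_j\in\{\pm1\}$, convergent iff $(s_1,z_1)\ne(1,1)$; a bar over the $j$-th argument means $z_j=-1$, no bar means $z_j=1$. *)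

theory Defs
  imports Complex_Main
begin

definition dec_tuples :: "nat \<Rightarrow> nat \<Rightarrow> nat list set" where
  "dec_tuples d N = {ns. length ns = d \<and> sorted_wrt (>) ns \<and> (\<forall>n\<in>set ns. 0 < n \<and> n < N)}"

text \<open>Euler sum zeta(s_1,...,s_d; z_1,...,z_d) = sum over n_1 > ... > n_d > 0 of
  prod_j z_j^{n_j} / n_j^{s_j}, defined as the limit of the truncations n_1 < N
  (the usual meaning of the iterated series).\<close>
definition euler_zeta :: "nat list \<Rightarrow> int list \<Rightarrow> real" where
  "euler_zeta s z = lim (\<lambda>N. \<Sum>ns\<in>dec_tuples (length s) N.
      \<Prod>j<length s. (real_of_int (z ! j)) ^ (ns ! j) / (real (ns ! j)) ^ (s ! j))"

text \<open>Multiple T-value: sum over m_1 > ... > m_d > 0 with m_j = d - j + 1 (mod 2)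
  (1-indexed j; i.e. index j (0-indexed) has parity d - j) of 2^d / prod m_j^{s_j}.\<close>
definition multT :: "nat list \<Rightarrow> real" where
  "multT s = lim (\<lambda>N. \<Sum>ns\<in>{ns\<in>dec_tuples (length s) N.
        \<forall>j<length s. (ns ! j) mod 2 = (length s - j) mod 2}.
      2 ^ length s / (\<Prod>j<length s. (real (ns ! j)) ^ (s ! j)))"

end

theory Submission
  imports Defs "HOL-Analysis.Infinite_Sum" "HOL-Analysis.Summation_Tests"
begin

text \<open>
  All series are written over the largest index \<open>a\<close>, the \<open>a\<close>-th term being a finite sum
  over \<open>0 < c < b < a\<close>; they converge absolutely by comparison with \<open>(a b c) powr (-4/3)\<close>.
  The character combination of Euler sums keeps exactly the terms with parity patterns
  (even, odd, odd) and (odd, even, odd) of \<open>(a, b, c)\<close>, so the right-hand side is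
  \<open>8 B + 16 C - 16 D\<close>, where \<open>B\<close> is the sum of \<open>1 / (a^u b^2)\<close> over (even, odd) and
  \<open>C\<close>, \<open>D\<close> are the sums of \<open>1 / (a^u b c)\<close> over those two patterns.

  On the left, summing the geometric progression in \<open>k\<close> gives
  \<open>\<Sum>\<^sub>k 1 / (a^k b^(u+1-k)) = 1 / (a (a-b) b^(u-1)) - 1 / (a^u (a-b))\<close>.
  In the second part the substitution \<open>b \<mapsto> a - b + c\<close> and partial fractions in \<open>c\<close>
  give \<open>2 D\<close>. In the first part one sums over \<open>a\<close> first: the sum of \<open>1 / (a (a-b))\<close> over
  odd \<open>a > b\<close> telescopes to \<open>h(b) / b\<close>, with \<open>h(b)\<close> the sum of \<open>1/c\<close> over odd \<open>c < b\<close>,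
  and \<open>\<Sum>\<^sub>b h(b)^2 / b^u = B + 2 C\<close>. Hence the left-hand side is \<open>8 (B + 2 C - 2 D)\<close>.
\<close>

definition tri_sum :: "(nat \<Rightarrow> nat \<Rightarrow> nat \<Rightarrow> real) \<Rightarrow> nat \<Rightarrow> real" where
  "tri_sum f a = (\<Sum>b\<in>{0<..<a}. \<Sum>c\<in>{0<..<b}. f a b c)"

definition bi_sum :: "(nat \<Rightarrow> nat \<Rightarrow> real) \<Rightarrow> nat \<Rightarrow> real" where
  "bi_sum f a = (\<Sum>b\<in>{0<..<a}. f a b)"

lemma finite_dec_tuples: "finite (dec_tuples d N)"
proof (rule finite_subset)
  show "dec_tuples d N \<subseteq> {xs. set xs \<subseteq> {..<N} \<and> length xs = d}"
    unfolding dec_tuples_def by auto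
qed (rule finite_lists_length_eq, simp)

lemma dec_tuples_0: "dec_tuples 0 N = {[]}"
  by (auto simp: dec_tuples_def)

lemma dec_tuples_Suc:
  "dec_tuples (Suc d) N = (\<Union>n\<in>{0<..<N}. (#) n ` dec_tuples d n)"
proof (intro equalityI subsetI)
  fix ns assume "ns \<in> dec_tuples (Suc d) N"
  then obtain n t where "ns = n # t" "n \<in> {0<..<N}" "t \<in> dec_tuples d n"
    unfolding dec_tuples_def by (cases ns) auto
  then show "ns \<in> (\<Union>n\<in>{0<..<N}. (#) n ` dec_tuples d n)" by blast
qed (fastforce simp: dec_tuples_def)

lemma sum_dec_tuples_Suc:
  "(\<Sum>ns\<in>dec_tuples (Suc d) N. g ns) = (\<Sum>n\<in>{0<..<N}. \<Sum>t\<in>dec_tuples d n. g (n # t))"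
  unfolding dec_tuples_Suc
  by (subst sum.UNION_disjoint) (auto simp: finite_dec_tuples sum.reindex)

lemma sum_dec_tuples_2:
  "(\<Sum>ns\<in>dec_tuples 2 N. g ns) = (\<Sum>a<N. bi_sum (\<lambda>a b. g [a, b]) a)"
proof -
  have "(\<Sum>ns\<in>dec_tuples 2 N. g ns) = (\<Sum>a\<in>{0<..<N}. bi_sum (\<lambda>a b. g [a, b]) a)"
    by (simp add: numeral_2_eq_2 sum_dec_tuples_Suc dec_tuples_0 bi_sum_def)
  also have "\<dots> = (\<Sum>a<N. bi_sum (\<lambda>a b. g [a, b]) a)"
    by (rule sum.mono_neutral_left) (auto simp: bi_sum_def)
  finally show ?thesis .
qed

lemma sum_dec_tuples_3:
  "(\<Sum>ns\<in>dec_tuples 3 N. g ns) = (\<Sum>a<N. tri_sum (\<lambda>a b c. g [a, b, c]) a)"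
proof -
  have "(\<Sum>ns\<in>dec_tuples 3 N. g ns) = (\<Sum>a\<in>{0<..<N}. tri_sum (\<lambda>a b c. g [a, b, c]) a)"
    by (simp add: numeral_3_eq_3 sum_dec_tuples_Suc dec_tuples_0 tri_sum_def)
  also have "\<dots> = (\<Sum>a<N. tri_sum (\<lambda>a b c. g [a, b, c]) a)"
    by (rule sum.mono_neutral_left) (auto simp: tri_sum_def)
  finally show ?thesis .
qed

lemma lim_partial_sums: "summable f \<Longrightarrow> lim (\<lambda>N. \<Sum>a<N. f a) = (\<Sum>a. f (a :: nat) :: real)"
  by (rule limI) (rule summable_LIMSEQ)

lemma inverse_le_powr_triple:
  fixes a b c :: real
  assumes "1 \<le> b" "1 \<le> c" "b \<le> a" "c \<le> a"
  shows "1 / (a\<^sup>2 * b * c) \<le> (a * b * c) powr (-4/3)"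
proof -
  define p where "p = a * b * c"
  have p: "1 \<le> p" unfolding p_def using assms by (auto intro!: mult_ge1_I)
  have "b * c \<le> a * a" using assms by (intro mult_mono) auto
  then have "p \<le> a ^ 3" unfolding p_def using assms by (simp add: power3_eq_cube mult.assoc)
  then have "p powr (1/3) \<le> (a ^ 3) powr (1/3)" using p by (intro powr_mono2) auto
  also have "(a ^ 3) powr (1/3) = a"
    using assms by (simp add: powr_numeral [symmetric] powr_powr del: powr_numeral)
  finally have "p * p powr (1/3) \<le> p * a" using p by (intro mult_left_mono) auto
  moreover have "p powr (4/3) = p * p powr (1/3)"
    using powr_add [of p 1 "1/3"] p by simp
  ultimately have "p powr (4/3) \<le> a\<^sup>2 * b * c" by (simp add: p_def power2_eq_square mult_ac)
  then have "1 / (a\<^sup>2 * b * c) \<le> 1 / p powr (4/3)"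
    using p assms by (intro divide_left_mono mult_pos_pos) auto
  then show ?thesis using p by (simp add: p_def powr_minus_divide)
qed

lemma inverse_le_powr_pair:
  fixes a b :: real
  assumes "1 \<le> a" "1 \<le> b"
  shows "1 / (a\<^sup>2 * b\<^sup>2) \<le> (a * b) powr (-4/3)"
proof -
  have ab: "1 \<le> a * b" using assms by (rule mult_ge1_I)
  then have "(a * b) powr (4/3) \<le> (a * b) powr 2" by (intro powr_mono) auto
  then have "1 / (a\<^sup>2 * b\<^sup>2) \<le> 1 / (a * b) powr (4/3)"
    using assms by (intro divide_left_mono mult_pos_pos) (auto simp: power_mult_distrib)
  then show ?thesis using ab by (simp add: powr_minus_divide)
qed

lemma summable_tri_sum:
  assumes bound: "\<And>a b c. 0 < c \<Longrightarrow> c < b \<Longrightarrow> b < a \<Longrightarrow> \<bar>f a b c\<bar> \<le> 1 / (real a ^ 2 * real b * real c)"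
  shows "summable (tri_sum f)"
proof -
  define \<rho> :: "nat \<Rightarrow> real" where "\<rho> n = real n powr (-4/3)" for n
  have "summable \<rho>" unfolding \<rho>_def by (subst summable_real_powr_iff) simp
  have \<rho>_nonneg: "0 \<le> \<rho> n" for n by (simp add: \<rho>_def)
  have \<rho>_le: "sum \<rho> {0<..<n} \<le> suminf \<rho>" for n
    using \<open>summable \<rho>\<close> by (rule sum_le_suminf) (auto simp: \<rho>_nonneg)
  have le: "\<bar>tri_sum f a\<bar> \<le> (suminf \<rho>)\<^sup>2 * \<rho> a" for a
  proof -
    have "\<bar>tri_sum f a\<bar> \<le> (\<Sum>b\<in>{0<..<a}. \<Sum>c\<in>{0<..<b}. \<rho> a * \<rho> b * \<rho> c)"
      unfolding tri_sum_def
    proof (intro order.trans [OF sum_abs] sum_mono order.trans [OF sum_abs])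
      fix b c assume "b \<in> {0<..<a}" "c \<in> {0<..<b}"
      then show "\<bar>f a b c\<bar> \<le> \<rho> a * \<rho> b * \<rho> c"
        using bound [of c b a] inverse_le_powr_triple [of "real b" "real c" "real a"]
        by (simp add: \<rho>_def powr_mult)
    qed
    also have "\<dots> = \<rho> a * (\<Sum>b\<in>{0<..<a}. \<rho> b * sum \<rho> {0<..<b})"
      by (simp add: sum_distrib_left mult.assoc)
    also have "\<dots> \<le> \<rho> a * (sum \<rho> {0<..<a} * suminf \<rho>)"
      by (auto simp: sum_distrib_right intro!: mult_left_mono sum_mono \<rho>_le \<rho>_nonneg)
    also have "\<dots> \<le> \<rho> a * (suminf \<rho> * suminf \<rho>)"
      by (intro mult_left_mono mult_right_mono \<rho>_le suminf_nonneg \<open>summable \<rho>\<close> \<rho>_nonneg)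
    finally show ?thesis by (simp add: power2_eq_square mult_ac)
  qed
  show ?thesis
    by (rule summable_comparison_test' [OF summable_mult [OF \<open>summable \<rho>\<close>]]) (use le in simp)
qed

lemma summable_bi_sum:
  assumes bound: "\<And>a b. 0 < b \<Longrightarrow> b < a \<Longrightarrow> \<bar>f a b\<bar> \<le> 1 / (real a ^ 2 * real b ^ 2)"
  shows "summable (bi_sum f)"
proof -
  define \<rho> :: "nat \<Rightarrow> real" where "\<rho> n = real n powr (-4/3)" for n
  have "summable \<rho>" unfolding \<rho>_def by (subst summable_real_powr_iff) simp
  have \<rho>_nonneg: "0 \<le> \<rho> n" for n by (simp add: \<rho>_def)
  have le: "\<bar>bi_sum f a\<bar> \<le> suminf \<rho> * \<rho> a" for a
  proof -
    have "\<bar>bi_sum f a\<bar> \<le> (\<Sum>b\<in>{0<..<a}. \<rho> a * \<rho> b)"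
      unfolding bi_sum_def
    proof (intro order.trans [OF sum_abs] sum_mono)
      fix b assume "b \<in> {0<..<a}"
      then show "\<bar>f a b\<bar> \<le> \<rho> a * \<rho> b"
        using bound [of b a] inverse_le_powr_pair [of "real a" "real b"]
        by (simp add: \<rho>_def powr_mult)
    qed
    also have "\<dots> \<le> \<rho> a * suminf \<rho>"
      by (auto simp: sum_distrib_left [symmetric] intro!: mult_left_mono sum_le_suminf \<open>summable \<rho>\<close> \<rho>_nonneg)
    finally show ?thesis by (simp add: mult_ac)
  qed
  show ?thesis
    by (rule summable_comparison_test' [OF summable_mult [OF \<open>summable \<rho>\<close>]]) (use le in simp)
qed

lemma tri_sum_cmult: "tri_sum (\<lambda>a b c. r * f a b c) a = r * tri_sum f a"
  by (simp add: tri_sum_def sum_distrib_left)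

lemma tri_sum_add: "tri_sum f a + tri_sum g a = tri_sum (\<lambda>a b c. f a b c + g a b c) a"
  by (simp add: tri_sum_def sum.distrib)

lemma tri_sum_diff: "tri_sum f a - tri_sum g a = tri_sum (\<lambda>a b c. f a b c - g a b c) a"
  by (simp add: tri_sum_def sum_subtractf)

lemma bi_sum_cmult: "bi_sum (\<lambda>a b. r * f a b) a = r * bi_sum f a"
  by (simp add: bi_sum_def sum_distrib_left)

text \<open>The suffix of a weight lists the parities of its arguments \<open>a, b, c\<close> (o = odd, e = even).\<close>

definition weight_oeo :: "nat \<Rightarrow> nat \<Rightarrow> nat \<Rightarrow> nat \<Rightarrow> nat \<Rightarrow> real" where
  "weight_oeo k l a b c =
     (if odd a \<and> even b \<and> odd c then 1 / (real a ^ k * real b ^ l * real c) else 0)"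

definition weight_eoo :: "nat \<Rightarrow> nat \<Rightarrow> nat \<Rightarrow> nat \<Rightarrow> real" where
  "weight_eoo k a b c = (if even a \<and> odd b \<and> odd c then 1 / (real a ^ k * real b * real c) else 0)"

definition weight_eo :: "nat \<Rightarrow> nat \<Rightarrow> nat \<Rightarrow> real" where
  "weight_eo k a b = (if even a \<and> odd b then 1 / (real a ^ k * real b ^ 2) else 0)"

lemma inverse_le_triple_power:
  assumes "2 \<le> k" "1 \<le> l" "0 < b" "0 < c" "b < a"
  shows "1 / (real a ^ k * real b ^ l * real c) \<le> 1 / (real a ^ 2 * real b * real c)"
proof -
  have "real a ^ 2 \<le> real a ^ k" "real b \<le> real b ^ l"
    using assms power_increasing [of 1 l "real b"] by (auto intro: power_increasing)
  then show ?thesis using assms by (intro divide_left_mono mult_mono mult_pos_pos) auto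
qed

lemma summable_weight_oeo: "2 \<le> k \<Longrightarrow> 1 \<le> l \<Longrightarrow> summable (tri_sum (weight_oeo k l))"
  by (rule summable_tri_sum) (auto simp: weight_oeo_def intro!: inverse_le_triple_power)

lemma summable_weight_eoo: "2 \<le> k \<Longrightarrow> summable (tri_sum (weight_eoo k))"
  using inverse_le_triple_power [of k 1]
  by (intro summable_tri_sum) (auto simp: weight_eoo_def)

lemma summable_weight_eo: "2 \<le> k \<Longrightarrow> summable (bi_sum (weight_eo k))"
proof (rule summable_bi_sum)
  fix a b :: nat assume "2 \<le> k" "0 < b" "b < a"
  then have "real a ^ 2 \<le> real a ^ k" by (intro power_increasing) auto
  with \<open>0 < b\<close> \<open>b < a\<close> show "\<bar>weight_eo k a b\<bar> \<le> 1 / (real a ^ 2 * real b ^ 2)"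
    by (auto simp: weight_eo_def intro!: divide_left_mono mult_right_mono mult_pos_pos)
qed

lemma multT_depth3:
  assumes "2 \<le> k" "1 \<le> l"
  shows "multT [k, l, 1] = 8 * (\<Sum>a. tri_sum (weight_oeo k l) a)"
proof -
  have summand: "(if \<forall>j<3. [a, b, c] ! j mod 2 = (3 - j) mod 2
         then 2 ^ 3 / (\<Prod>j<3. real ([a, b, c] ! j) ^ ([k, l, 1] ! j)) else 0)
        = 8 * weight_oeo k l a b c" for a b c
    by (simp add: numeral_3_eq_3 less_Suc_eq all_conj_distrib weight_oeo_def mult.assoc
        flip: odd_iff_mod_2_eq_one even_iff_mod_2_eq_zero)
  have "length [k, l, 1] = 3" by simp
  then have "multT [k, l, 1] = lim (\<lambda>N. \<Sum>ns\<in>dec_tuples 3 N.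
      if \<forall>j<3. ns ! j mod 2 = (3 - j) mod 2
      then 2 ^ 3 / (\<Prod>j<3. real (ns ! j) ^ ([k, l, 1] ! j)) else 0)"
    unfolding multT_def by (simp only: sum.inter_filter [OF finite_dec_tuples])
  also have "\<dots> = lim (\<lambda>N. \<Sum>a<N. 8 * tri_sum (weight_oeo k l) a)"
    by (simp only: sum_dec_tuples_3 summand tri_sum_cmult)
  also have "\<dots> = 8 * (\<Sum>a. tri_sum (weight_oeo k l) a)"
    using summable_weight_oeo [OF assms] by (simp add: lim_partial_sums suminf_mult summable_mult)
  finally show ?thesis .
qed

lemma multT_depth2:
  assumes "2 \<le> k"
  shows "multT [k, 2] = 4 * (\<Sum>a. bi_sum (weight_eo k) a)"
proof -
  have summand: "(if \<forall>j<2. [a, b] ! j mod 2 = (2 - j) mod 2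
         then 2 ^ 2 / (\<Prod>j<2. real ([a, b] ! j) ^ ([k, 2] ! j)) else 0)
        = 4 * weight_eo k a b" for a b
  proof -
    have "(\<forall>j<2. [a, b] ! j mod 2 = (2 - j) mod 2) \<longleftrightarrow> even a \<and> odd b"
      by (auto simp: less_2_cases_iff odd_iff_mod_2_eq_one)
    moreover have "(\<Prod>j<2. real ([a, b] ! j) ^ ([k, 2] ! j)) = real a ^ k * real b ^ 2"
      by (simp add: numeral_2_eq_2)
    ultimately show ?thesis by (simp add: weight_eo_def)
  qed
  have "length [k, 2] = 2" by simp
  then have "multT [k, 2] = lim (\<lambda>N. \<Sum>ns\<in>dec_tuples 2 N.
      if \<forall>j<2. ns ! j mod 2 = (2 - j) mod 2
      then 2 ^ 2 / (\<Prod>j<2. real (ns ! j) ^ ([k, 2] ! j)) else 0)"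
    unfolding multT_def by (simp only: sum.inter_filter [OF finite_dec_tuples])
  also have "\<dots> = lim (\<lambda>N. \<Sum>a<N. 4 * bi_sum (weight_eo k) a)"
    by (simp only: sum_dec_tuples_2 summand bi_sum_cmult)
  also have "\<dots> = 4 * (\<Sum>a. bi_sum (weight_eo k) a)"
    using summable_weight_eo [OF assms] by (simp add: lim_partial_sums suminf_mult summable_mult)
  finally show ?thesis .
qed

lemma euler_zeta_depth3:
  fixes z0 z1 z2 :: int
  assumes "2 \<le> s" "\<bar>z0\<bar> = 1" "\<bar>z1\<bar> = 1" "\<bar>z2\<bar> = 1"
  shows "tri_sum (\<lambda>a b c. of_int z0 ^ a * of_int z1 ^ b * of_int z2 ^ c / (real a ^ s * real b * real c))
           sums euler_zeta [s, 1, 1] [z0, z1, z2]"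
    (is "tri_sum ?w sums _")
proof -
  have summand: "(\<Prod>j<3. real_of_int ([z0, z1, z2] ! j) ^ ([a, b, c] ! j) / real ([a, b, c] ! j) ^ ([s, 1, 1] ! j))
        = ?w a b c" for a b c
    by (simp add: numeral_3_eq_3)
  have "summable (tri_sum ?w)"
  proof (rule summable_tri_sum)
    fix a b c :: nat assume "0 < c" "c < b" "b < a"
    then show "\<bar>?w a b c\<bar> \<le> 1 / (real a ^ 2 * real b * real c)"
      using assms inverse_le_triple_power [of s 1 b c a]
      by (simp add: abs_mult power_abs flip: of_int_abs)
  qed
  moreover have "length [s, 1, 1] = 3" by simp
  then have "euler_zeta [s, 1, 1] [z0, z1, z2] = lim (\<lambda>N. \<Sum>a<N. tri_sum ?w a)"
    unfolding euler_zeta_def by (simp only: sum_dec_tuples_3 summand)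
  ultimately show ?thesis by (simp add: lim_partial_sums summable_sums)
qed

lemma euler_zeta_parity_combination:
  assumes "2 \<le> u"
  shows "euler_zeta [u, 1, 1] [1, -1, -1] + euler_zeta [u, 1, 1] [-1, 1, 1]
           - euler_zeta [u, 1, 1] [-1, 1, -1] - euler_zeta [u, 1, 1] [1, -1, 1]
         = 4 * (\<Sum>a. tri_sum (weight_eoo u) a) - 4 * (\<Sum>a. tri_sum (weight_oeo u 1) a)"
proof -
  define w :: "int \<Rightarrow> int \<Rightarrow> int \<Rightarrow> nat \<Rightarrow> real" where
    "w z0 z1 z2 = tri_sum (\<lambda>a b c.
       of_int z0 ^ a * of_int z1 ^ b * of_int z2 ^ c / (real a ^ u * real b * real c))" for z0 z1 z2
  have "(\<lambda>a. w 1 (-1) (-1) a + w (-1) 1 1 a - w (-1) 1 (-1) a - w 1 (-1) 1 a) sums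
          (euler_zeta [u, 1, 1] [1, -1, -1] + euler_zeta [u, 1, 1] [-1, 1, 1]
           - euler_zeta [u, 1, 1] [-1, 1, -1] - euler_zeta [u, 1, 1] [1, -1, 1])"
    unfolding w_def by (intro sums_diff sums_add euler_zeta_depth3 assms) auto
  \<comment> \<open>The combined sign is \<open>(1 - (-1)^c) ((-1)^a - (-1)^b)\<close>.\<close>
  moreover have "w 1 (-1) (-1) a + w (-1) 1 1 a - w (-1) 1 (-1) a - w 1 (-1) 1 a
        = 4 * tri_sum (weight_eoo u) a - 4 * tri_sum (weight_oeo u 1) a" for a
    unfolding w_def tri_sum_add tri_sum_diff tri_sum_cmult [symmetric]
    by (rule arg_cong [where f = "\<lambda>f. tri_sum f a"], intro ext)
       (auto simp: weight_eoo_def weight_oeo_def)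
  moreover have "(\<lambda>a. 4 * tri_sum (weight_eoo u) a - 4 * tri_sum (weight_oeo u 1) a) sums
          (4 * (\<Sum>a. tri_sum (weight_eoo u) a) - 4 * (\<Sum>a. tri_sum (weight_oeo u 1) a))"
    using assms by (intro sums_diff sums_mult summable_sums summable_weight_eoo summable_weight_oeo) auto
  ultimately show ?thesis by (simp add: sums_unique2)
qed

definition odd_harmonic :: "nat \<Rightarrow> real" where
  "odd_harmonic n = (\<Sum>c\<in>{0<..<n}. if odd c then 1 / real c else 0)"

lemma odd_harmonic_nonneg: "0 \<le> odd_harmonic n"
  by (auto simp: odd_harmonic_def intro: sum_nonneg)

lemma odd_harmonic_Suc: "odd_harmonic (Suc n) = odd_harmonic n + (if odd n then 1 / real n else 0)"
proof (cases "n = 0")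
  case False
  then have "{0<..<Suc n} = insert n {0<..<n}" by auto
  then show ?thesis by (simp add: odd_harmonic_def)
qed (simp add: odd_harmonic_def)

lemma odd_harmonic_double: "odd_harmonic (2 * p) = (\<Sum>j<p. 1 / (1 + 2 * real j))"
proof (induction p)
  case 0
  show ?case by (simp add: odd_harmonic_def)
next
  case (Suc p)
  then show ?case by (simp add: odd_harmonic_Suc)
qed

lemma sum_odd_inverse_reflect:
  assumes "even b"
  shows "(\<Sum>c\<in>{0<..<b}. if odd c then 1 / (real b - real c) else 0) = odd_harmonic b"
proof -
  have "odd (b - c) \<longleftrightarrow> odd c" if "c < b" for c using that assms by presburger
  then show ?thesis
    unfolding odd_harmonic_def
    by (intro sum.reindex_bij_witness [of _ "\<lambda>c. b - c" "\<lambda>c. b - c"]) (auto simp: of_nat_diff)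
qed

lemma sum_odd_inverse_product:
  assumes "even b"
  shows "(\<Sum>c\<in>{0<..<b}. if odd c then 1 / (real c * (real b - real c)) else 0) = 2 * odd_harmonic b / real b"
proof -
  have "(\<Sum>c\<in>{0<..<b}. if odd c then 1 / (real c * (real b - real c)) else 0)
      = (\<Sum>c\<in>{0<..<b}. ((if odd c then 1 / real c else 0) + (if odd c then 1 / (real b - real c) else 0)) / real b)"
    by (intro sum.cong) (auto simp: field_simps)
  also have "\<dots> = 2 * odd_harmonic b / real b"
    by (simp add: sum.distrib sum_odd_inverse_reflect [OF assms] odd_harmonic_def flip: sum_divide_distrib)
  finally show ?thesis .
qed

text \<open>For odd \<open>a\<close>, \<open>(b, c) \<mapsto> (a - b + c, c)\<close> is an involution of \<open>{0 < c < b < a}\<close>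
  preserving the parity of \<open>b\<close>; it turns \<open>a - b\<close> into \<open>b - c\<close>.\<close>

lemma sum_even_odd_pairs_shift:
  assumes "odd a"
  shows "(\<Sum>b\<in>{0<..<a}. \<Sum>c\<in>{0<..<b}. if even b \<and> odd c then 1 / ((real a - real b) * real c) else 0)
       = (\<Sum>b\<in>{0<..<a}. \<Sum>c\<in>{0<..<b}. if even b \<and> odd c then 1 / (real c * (real b - real c)) else 0)"
proof -
  have pairs: "(\<Sum>b\<in>{0<..<a}. \<Sum>c\<in>{0<..<b}. f b c) = (\<Sum>(b, c)\<in>{(b, c). 0 < c \<and> c < b \<and> b < a}. f b c)"
    for f :: "nat \<Rightarrow> nat \<Rightarrow> real"
    by (subst sum.Sigma) (auto intro!: sum.cong)
  have "(even (a - b + c) \<and> odd c) \<longleftrightarrow> (even b \<and> odd c)" if "c < b" "b < a" for b c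
    using that assms by presburger
  then show ?thesis
    unfolding pairs
    by (intro sum.reindex_bij_witness [of _ "\<lambda>(b, c). (a - b + c, c)" "\<lambda>(b, c). (a - b + c, c)"])
       (auto simp: of_nat_diff mult.commute)
qed

lemma tri_sum_odd_innermost:
  "tri_sum (\<lambda>a b c. if P a b \<and> odd c then g a b / real c else 0) a
     = (\<Sum>b\<in>{0<..<a}. if P a b then g a b * odd_harmonic b else 0)"
  unfolding tri_sum_def odd_harmonic_def by (auto simp: sum_distrib_left intro!: sum.cong)

lemma tri_sum_weight_oeo_1:
  "tri_sum (weight_oeo u 1) a
     = (\<Sum>b\<in>{0<..<a}. if odd a \<and> even b then odd_harmonic b / (real a ^ u * real b) else 0)"
proof -
  have "tri_sum (weight_oeo u 1) a
      = tri_sum (\<lambda>a b c. if (odd a \<and> even b) \<and> odd c then 1 / (real a ^ u * real b) / real c else 0) a"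
    unfolding tri_sum_def weight_oeo_def by (intro sum.cong) auto
  also have "\<dots> = (\<Sum>b\<in>{0<..<a}. if odd a \<and> even b then 1 / (real a ^ u * real b) * odd_harmonic b else 0)"
    by (rule tri_sum_odd_innermost)
  finally show ?thesis by (auto intro!: sum.cong)
qed

lemma tri_sum_shifted_weight:
  "tri_sum (\<lambda>a b c. if odd a \<and> even b \<and> odd c then 1 / (real a ^ u * (real a - real b) * real c) else 0) a
     = 2 * tri_sum (weight_oeo u 1) a"
proof (cases "odd a")
  case True
  have "tri_sum (\<lambda>a b c. if odd a \<and> even b \<and> odd c then 1 / (real a ^ u * (real a - real b) * real c) else 0) a
      = (\<Sum>b\<in>{0<..<a}. \<Sum>c\<in>{0<..<b}. if even b \<and> odd c then 1 / ((real a - real b) * real c) else 0) / real a ^ u"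
    unfolding tri_sum_def sum_divide_distrib using True by (intro sum.cong) auto
  also have "\<dots> = (\<Sum>b\<in>{0<..<a}. \<Sum>c\<in>{0<..<b}. if even b \<and> odd c then 1 / (real c * (real b - real c)) else 0) / real a ^ u"
    by (simp only: sum_even_odd_pairs_shift [OF True])
  also have "\<dots> = (\<Sum>b\<in>{0<..<a}. if even b then 2 * odd_harmonic b / real b else 0) / real a ^ u"
    by (intro arg_cong2 [where f = "(/)"] sum.cong) (auto simp flip: sum_odd_inverse_product)
  also have "\<dots> = 2 * tri_sum (weight_oeo u 1) a"
    unfolding tri_sum_weight_oeo_1 sum_divide_distrib sum_distrib_left using True by (intro sum.cong) auto
  finally show ?thesis .
qed (simp add: tri_sum_def weight_oeo_def)

lemma sums_shift_difference:
  fixes \<phi> :: "nat \<Rightarrow> 'a::real_normed_vector"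
  assumes "\<phi> \<longlonglongrightarrow> 0"
  shows "(\<lambda>j. \<phi> j - \<phi> (j + p)) sums (\<Sum>j<p. \<phi> j)"
proof (induction p)
  case (Suc p)
  have "(\<lambda>j. \<phi> (j + p)) \<longlonglongrightarrow> 0"
    using LIMSEQ_ignore_initial_segment [OF assms] .
  from telescope_sums' [OF this] have "(\<lambda>j. \<phi> (j + p) - \<phi> (Suc (j + p))) sums \<phi> p"
    by simp
  from sums_add [OF Suc.IH this] show ?case by (simp add: algebra_simps)
qed simp

lemma sums_odd_inverse_product_tail:
  assumes "even b" "0 < b"
  shows "(\<lambda>a. if odd a \<and> b < a then 1 / (real a * (real a - real b)) else 0) sums (odd_harmonic b / real b)"
proof -
  obtain p where b: "b = 2 * p" and "0 < p" using assms by auto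
  define f where "f = (\<lambda>a. if odd a \<and> b < a then 1 / (real a * (real a - real b)) else 0)"
  define \<phi> :: "nat \<Rightarrow> real" where "\<phi> j = 1 / (1 + 2 * real j)" for j
  have "((\<lambda>n. inverse (real (Suc n))) \<circ> (\<lambda>j. 2 * j)) \<longlonglongrightarrow> 0"
    by (intro LIMSEQ_subseq_LIMSEQ LIMSEQ_inverse_real_of_nat strict_monoI) simp
  moreover have "(\<lambda>n. inverse (real (Suc n))) \<circ> (\<lambda>j. 2 * j) = \<phi>"
    by (simp add: fun_eq_iff \<phi>_def inverse_eq_divide)
  ultimately have "\<phi> \<longlonglongrightarrow> 0" by simp
  then have "(\<lambda>j. (\<phi> j - \<phi> (j + p)) / real b) sums ((\<Sum>j<p. \<phi> j) / real b)"
    by (intro sums_divide sums_shift_difference)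
  moreover have "f (2 * (j + p) + 1) = (\<phi> j - \<phi> (j + p)) / real b" for j
  proof -
    have partial_fractions: "1 / ((x + y) * x) = (1 / x - 1 / (x + y)) / y" if "0 < x" "0 < y" for x y :: real
      using that by (simp add: diff_frac_eq)
    have "f (2 * (j + p) + 1) = 1 / ((1 + 2 * real j + 2 * real p) * (1 + 2 * real j))"
      by (simp add: f_def b algebra_simps)
    also have "\<dots> = (\<phi> j - \<phi> (j + p)) / real b"
      using partial_fractions [of "1 + 2 * real j" "2 * real p"] \<open>0 < p\<close>
      by (simp add: \<phi>_def b algebra_simps)
    finally show ?thesis .
  qed
  ultimately have "(\<lambda>j. f (2 * (j + p) + 1)) sums (odd_harmonic b / real b)"
    by (simp add: b odd_harmonic_double \<phi>_def)
  moreover have "strict_mono (\<lambda>j. 2 * (j + p) + 1)" by (rule strict_monoI) simp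
  moreover have "f a = 0" if "a \<notin> range (\<lambda>j. 2 * (j + p) + 1)" for a
  proof (rule ccontr)
    assume "f a \<noteq> 0"
    then have "odd a" "b < a" by (auto simp: f_def split: if_splits)
    then have "a = 2 * ((a - 1) div 2 - p + p) + 1" using b by presburger
    with that show False by blast
  qed
  ultimately have "f sums (odd_harmonic b / real b)"
    using sums_mono_reindex [of "\<lambda>j. 2 * (j + p) + 1" f] by blast
  then show ?thesis unfolding f_def .
qed

lemma sums_swap_nonneg:
  fixes h :: "nat \<Rightarrow> nat \<Rightarrow> real"
  assumes nonneg: "\<And>a b. 0 \<le> h a b"
    and rows: "\<And>a. h a sums F a"
    and columns: "\<And>b. (\<lambda>a. h a b) sums G b"
    and "summable G"
  shows "F sums suminf G"
proof -
  have columns': "((\<lambda>a. h a b) has_sum G b) UNIV" for b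
    using columns nonneg by (rule sums_nonneg_imp_has_sum)
  have rows': "(h a has_sum F a) UNIV" for a
    using rows nonneg by (rule sums_nonneg_imp_has_sum)
  have "0 \<le> G b" for b
    using columns' by (rule has_sum_nonneg) (rule nonneg)
  then have G: "(G has_sum suminf G) UNIV"
    using \<open>summable G\<close> by (intro sums_nonneg_imp_has_sum summable_sums)
  have "(\<lambda>(b, a). h a b) summable_on Sigma UNIV (\<lambda>_. UNIV)"
    using summable_on_SigmaI [where f = "\<lambda>(b, a). h a b" and g = G and A = UNIV and B = "\<lambda>_. UNIV"]
      columns' has_sum_imp_summable [OF G] nonneg
    by simp
  then have "((\<lambda>(b, a). h a b) has_sum suminf G) (Sigma UNIV (\<lambda>_. UNIV))"
    using has_sum_SigmaI [where f = "\<lambda>(b, a). h a b" and g = G and A = UNIV and B = "\<lambda>_. UNIV"]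
      columns' G
    by simp
  then have "((\<lambda>(a, b). h a b) has_sum suminf G) (UNIV \<times> UNIV)"
    by (subst has_sum_swap) (simp add: case_prod_unfold)
  then have "(F has_sum suminf G) UNIV"
    using has_sum_Sigma' [where f = "\<lambda>(a, b). h a b" and b = F and A = UNIV and B = "\<lambda>_. UNIV"] rows'
    by simp
  then show ?thesis by (rule has_sum_imp_sums)
qed

lemma sum_square_diagonal_lower:
  fixes x :: "nat \<Rightarrow> 'a::comm_semiring_1"
  shows "(\<Sum>c\<in>{0<..<n}. x c)\<^sup>2 = (\<Sum>c\<in>{0<..<n}. (x c)\<^sup>2) + 2 * (\<Sum>c\<in>{0<..<n}. \<Sum>d\<in>{0<..<c}. x c * x d)"
proof (induction n)
  case (Suc n)
  show ?case
  proof (cases "n = 0")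
    case False
    then have "{0<..<Suc n} = insert n {0<..<n}" by auto
    moreover have "(\<Sum>d\<in>{0<..<n}. x n * x d) = x n * (\<Sum>d\<in>{0<..<n}. x d)"
      by (simp add: sum_distrib_left)
    ultimately show ?thesis
      using Suc.IH by (simp add: power2_eq_square algebra_simps mult_2)
  next
    case True
    then have "{0<..<Suc n} = {}" by auto
    then show ?thesis by simp
  qed
qed simp

lemma odd_harmonic_square:
  "bi_sum (weight_eo u) b + 2 * tri_sum (weight_eoo u) b
     = (if even b then (odd_harmonic b)\<^sup>2 / real b ^ u else 0)"
proof (cases "even b")
  case True
  define x where "x c = (if odd c then 1 / real c else 0)" for c
  have "bi_sum (weight_eo u) b = (\<Sum>c\<in>{0<..<b}. (x c)\<^sup>2) / real b ^ u"
    unfolding bi_sum_def weight_eo_def x_def sum_divide_distrib using True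
    by (intro sum.cong) (auto simp: power2_eq_square)
  moreover have "tri_sum (weight_eoo u) b = (\<Sum>c\<in>{0<..<b}. \<Sum>d\<in>{0<..<c}. x c * x d) / real b ^ u"
    unfolding tri_sum_def weight_eoo_def x_def sum_divide_distrib using True
    by (intro sum.cong) auto
  moreover have "odd_harmonic b = (\<Sum>c\<in>{0<..<b}. x c)"
    unfolding odd_harmonic_def x_def ..
  ultimately show ?thesis
    using True by (simp add: sum_square_diagonal_lower add_divide_distrib)
qed (simp add: bi_sum_def tri_sum_def weight_eo_def weight_eoo_def)

lemma sums_tri_sum_harmonic:
  assumes "2 \<le> u"
  shows "tri_sum (\<lambda>a b c. if odd a \<and> even b \<and> odd c
             then 1 / (real a * (real a - real b) * real b ^ (u - 1) * real c) else 0)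
           sums ((\<Sum>a. bi_sum (weight_eo u) a) + 2 * (\<Sum>a. tri_sum (weight_eoo u) a))"
    (is "tri_sum ?Y sums _")
proof -
  define h where "h a b = (if odd a \<and> even b \<and> 0 < b \<and> b < a
                           then odd_harmonic b / (real a * (real a - real b) * real b ^ (u - 1)) else 0)" for a b
  define G where "G b = bi_sum (weight_eo u) b + 2 * tri_sum (weight_eoo u) b" for b
  have "tri_sum ?Y a = (\<Sum>b<a. h a b)" for a
  proof -
    have "tri_sum ?Y a
        = tri_sum (\<lambda>a b c. if (odd a \<and> even b) \<and> odd c
             then 1 / (real a * (real a - real b) * real b ^ (u - 1)) / real c else 0) a"
      unfolding tri_sum_def by (intro sum.cong) auto
    also have "\<dots> = (\<Sum>b<a. h a b)"
      unfolding tri_sum_odd_innermost h_def by (rule sum.mono_neutral_cong_left) auto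
    finally show ?thesis .
  qed
  then have rows: "h a sums tri_sum ?Y a" for a
    by (simp only:) (rule sums_finite, auto simp: h_def)
  have columns: "(\<lambda>a. h a b) sums G b" for b
  proof (cases "even b \<and> 0 < b")
    case True
    have "(\<lambda>a. odd_harmonic b / real b ^ (u - 1) *
            (if odd a \<and> b < a then 1 / (real a * (real a - real b)) else 0))
          sums (odd_harmonic b / real b ^ (u - 1) * (odd_harmonic b / real b))"
      using True by (intro sums_mult sums_odd_inverse_product_tail) auto
    moreover have "odd_harmonic b / real b ^ (u - 1) * (odd_harmonic b / real b) = G b"
    proof -
      have "real b ^ (u - 1) * real b = real b ^ u" using assms by (cases u) (auto simp: power_Suc2)
      then show ?thesis using True by (simp add: G_def odd_harmonic_square power2_eq_square)
    qed
    ultimately show ?thesis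
      using True by (simp add: h_def if_distrib mult_ac cong: if_cong)
  next
    case False
    then show ?thesis
      by (auto simp: h_def G_def odd_harmonic_square odd_harmonic_def)
  qed
  have "summable G"
    unfolding G_def using assms
    by (intro summable_add summable_mult summable_weight_eo summable_weight_eoo)
  moreover have "0 \<le> h a b" for a b
    by (simp add: h_def odd_harmonic_nonneg)
  ultimately have "tri_sum ?Y sums suminf G"
    using rows columns by (intro sums_swap_nonneg [where h = h])
  moreover have "suminf G = (\<Sum>a. bi_sum (weight_eo u) a) + 2 * (\<Sum>a. tri_sum (weight_eoo u) a)"
    unfolding G_def
    using suminf_add [OF summable_weight_eo summable_mult [OF summable_weight_eoo]]
      suminf_mult [OF summable_weight_eoo] assms
    by simp
  ultimately show ?thesis by simp
qed

lemma sum_inverse_powers_split: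
  fixes x y :: real
  assumes "0 < y" "y < x" "1 \<le> u"
  shows "(\<Sum>k=2..u. 1 / (x ^ k * y ^ (u + 1 - k)))
           = 1 / (x * (x - y) * y ^ (u - 1)) - 1 / (x ^ u * (x - y))"
  using assms(3)
proof (induction u rule: nat_induct_at_least)
  case (Suc u)
  have "{2..Suc u} = insert (Suc u) {2..u}" using Suc.hyps by auto
  moreover have "(\<Sum>k=2..u. 1 / (x ^ k * y ^ (Suc u + 1 - k)))
                   = (\<Sum>k=2..u. 1 / (x ^ k * y ^ (u + 1 - k))) / y"
    unfolding sum_divide_distrib
  proof (intro sum.cong)
    fix k assume "k \<in> {2..u}"
    then have "Suc u + 1 - k = Suc (u + 1 - k)" by (simp add: Suc_diff_le)
    then show "1 / (x ^ k * y ^ (Suc u + 1 - k)) = 1 / (x ^ k * y ^ (u + 1 - k)) / y"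
      by (simp add: mult_ac)
  qed simp
  ultimately have "(\<Sum>k=2..Suc u. 1 / (x ^ k * y ^ (Suc u + 1 - k)))
      = 1 / (x ^ Suc u * y) + (\<Sum>k=2..u. 1 / (x ^ k * y ^ (u + 1 - k))) / y"
    by simp
  also have "\<dots> = 1 / (x ^ Suc u * y) + (1 / (x * (x - y) * y ^ (u - 1)) - 1 / (x ^ u * (x - y))) / y"
    by (simp only: Suc.IH)
  also have "\<dots> = 1 / (x * (x - y) * y ^ (Suc u - 1)) - 1 / (x ^ Suc u * (x - y))"
  proof -
    have "y ^ u = y ^ (u - 1) * y" using Suc.hyps by (cases u) (auto simp: power_Suc2)
    moreover have "x - y \<noteq> 0" "x \<noteq> 0" "y \<noteq> 0" "y ^ (u - 1) \<noteq> 0" "x ^ u \<noteq> 0"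
      using assms by auto
    ultimately show ?thesis
      by (simp add: divide_simps) (simp add: algebra_simps)
  qed
  finally show ?case .
qed simp

lemma sum_weight_oeo_split:
  assumes "1 \<le> u" "0 < b" "b < a"
  shows "(\<Sum>k=2..u. weight_oeo k (u + 1 - k) a b c)
       = (if odd a \<and> even b \<and> odd c
          then 1 / (real a * (real a - real b) * real b ^ (u - 1) * real c) else 0)
       - (if odd a \<and> even b \<and> odd c then 1 / (real a ^ u * (real a - real b) * real c) else 0)"
proof (cases "odd a \<and> even b \<and> odd c")
  case True
  have "(\<Sum>k=2..u. weight_oeo k (u + 1 - k) a b c)
      = (\<Sum>k=2..u. 1 / (real a ^ k * real b ^ (u + 1 - k))) / real c"
    unfolding weight_oeo_def sum_divide_distrib using True by (intro sum.cong) auto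
  also have "\<dots> = (1 / (real a * (real a - real b) * real b ^ (u - 1))
                     - 1 / (real a ^ u * (real a - real b))) / real c"
    using assms by (simp only: sum_inverse_powers_split)
  finally show ?thesis
    using True by (simp add: diff_divide_distrib)
next
  case False
  then show ?thesis by (simp add: weight_oeo_def if_not_P [OF False])
qed

lemma sum_suminf_weight_oeo:
  assumes "2 \<le> u"
  shows "(\<Sum>k=2..u. \<Sum>a. tri_sum (weight_oeo k (u + 1 - k)) a)
       = (\<Sum>a. bi_sum (weight_eo u) a) + 2 * (\<Sum>a. tri_sum (weight_eoo u) a)
         - 2 * (\<Sum>a. tri_sum (weight_oeo u 1) a)"
proof -
  define Y where "Y = tri_sum (\<lambda>a b c. if odd a \<and> even b \<and> odd c
    then 1 / (real a * (real a - real b) * real b ^ (u - 1) * real c) else 0)"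
  define X where "X = tri_sum (\<lambda>a b c. if odd a \<and> even b \<and> odd c
    then 1 / (real a ^ u * (real a - real b) * real c) else 0)"
  have "(\<lambda>a. \<Sum>k=2..u. tri_sum (weight_oeo k (u + 1 - k)) a)
          sums (\<Sum>k=2..u. \<Sum>a. tri_sum (weight_oeo k (u + 1 - k)) a)"
    by (intro sums_sum summable_sums summable_weight_oeo) auto
  moreover have "(\<Sum>k=2..u. tri_sum (weight_oeo k (u + 1 - k)) a) = Y a - X a" for a
  proof -
    have "(\<Sum>k=2..u. tri_sum (weight_oeo k (u + 1 - k)) a)
        = tri_sum (\<lambda>a b c. \<Sum>k=2..u. weight_oeo k (u + 1 - k) a b c) a"
      unfolding tri_sum_def by (simp add: sum.swap [of _ "{2..u}"])
    also have "\<dots> = Y a - X a"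
      unfolding X_def Y_def tri_sum_diff unfolding tri_sum_def
      using assms by (intro sum.cong refl sum_weight_oeo_split) auto
    finally show ?thesis .
  qed
  moreover have "(\<lambda>a. Y a - X a) sums
      ((\<Sum>a. bi_sum (weight_eo u) a) + 2 * (\<Sum>a. tri_sum (weight_eoo u) a)
       - 2 * (\<Sum>a. tri_sum (weight_oeo u 1) a))"
    unfolding X_def Y_def tri_sum_shifted_weight using assms
    by (intro sums_diff sums_tri_sum_harmonic sums_mult summable_sums summable_weight_oeo) auto
  ultimately show ?thesis by (simp add: sums_unique2)
qed

theorem corollary5p3:
  fixes w u :: nat
  assumes "w \<ge> 4" and "u = w - 2"
  shows "(\<Sum>a\<in>{a. \<exists>b. a + b = w - 1 \<and> a \<ge> 2 \<and> b \<ge> 1}. multT [a, w - 1 - a, 1])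
    = 2 * multT [u, 2]
      + 4 * (euler_zeta [u, 1, 1] [1, -1, -1] + euler_zeta [u, 1, 1] [-1, 1, 1]
             - euler_zeta [u, 1, 1] [-1, 1, -1] - euler_zeta [u, 1, 1] [1, -1, 1])"
proof -
  have "2 \<le> u" using assms by simp
  have "{a. \<exists>b. a + b = w - 1 \<and> a \<ge> 2 \<and> b \<ge> 1} = {2..u}"
  proof (intro set_eqI iffI)
    fix a assume "a \<in> {2..u}"
    then show "a \<in> {a. \<exists>b. a + b = w - 1 \<and> a \<ge> 2 \<and> b \<ge> 1}"
      using assms by (auto intro!: exI [of _ "w - 1 - a"])
  qed (use assms in auto)
  then have "(\<Sum>a\<in>{a. \<exists>b. a + b = w - 1 \<and> a \<ge> 2 \<and> b \<ge> 1}. multT [a, w - 1 - a, 1])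
      = (\<Sum>k=2..u. 8 * (\<Sum>a. tri_sum (weight_oeo k (u + 1 - k)) a))"
  proof (intro sum.cong refl)
    fix k assume "k \<in> {2..u}"
    then have "w - 1 - k = u + 1 - k" "2 \<le> k" "1 \<le> u + 1 - k" using assms by auto
    then show "multT [k, w - 1 - k, 1] = 8 * (\<Sum>a. tri_sum (weight_oeo k (u + 1 - k)) a)"
      by (simp only: multT_depth3)
  qed
  also have "\<dots> = 8 * (\<Sum>k=2..u. \<Sum>a. tri_sum (weight_oeo k (u + 1 - k)) a)"
    by (simp only: sum_distrib_left)
  also have "\<dots> = 8 * ((\<Sum>a. bi_sum (weight_eo u) a) + 2 * (\<Sum>a. tri_sum (weight_eoo u) a)
         - 2 * (\<Sum>a. tri_sum (weight_oeo u 1) a))"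
    by (simp only: sum_suminf_weight_oeo [OF \<open>2 \<le> u\<close>])
  finally show ?thesis
    using multT_depth2 [OF \<open>2 \<le> u\<close>] euler_zeta_parity_combination [OF \<open>2 \<le> u\<close>] by simp
qed

end
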